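(* Suppose $(\mathcal I^*,\mathcal J^* )$ is an optimal basis of $V^{\mathrm{LP}}$ (as identified by Algorithm 1), with corresponding optimal primal solution $\bm x^*$ and corresponding optimal dual solution $\bm y^*$ (so $\bm y^*$ is supported on $\mathcal J^*$ and $A_{\mathcal J^*,\mathcal I^*}^\top\bm y^*_{\mathcal J^*}=\bm r_{\mathcal I^*}$). Let $\bm x^1,\dots,\bm x^N$ and $\bm c^N$ be generated by Algorithm 2 run with $N$ rounds and basis $(\mathcal I^*,\mathcal J^* )$. Then $$N\cdot V^{\mathrm{LP}}-\sum_{n=1}^N\bm r^\top\mathbb E[\bm x^n]\le\sum_{(s,a)\in\mathcal J^*}y^*_{(s,a)}\,\mathbb E\big[c^N_{(s,a)}\big].$$
   Context: Setting: a discounted MDP with state space $\mathcal S$, action space $\mathcal A$, discount $\gamma\in(0,1)$, unknown kernel $P$, cost $c(s,a)\in[0,1]$; a generative model returns $s'\sim P(\cdot|s,a)$ independently on each query. Basis functions $\phi_1,\dots,\phi_{d_1}$, positive weights $\mu(s)$, finite constraint index set $\mathcal K\subseteq\mathcal S\times\mathcal A$, $K=|\mathcal K|$. LP: $V^{\mathrm{LP}}=\max_{\bm x\in\mathbb R^{d_1}}\bm r^\top\bm x$ s.t. $A\bm x\le\bm c$, with $r_i=\sum_s\mu(s)\phi_i(s)$, $A_{(s,a),i}=\phi_i(s)-\gamma\sum_{s'}P(s'|s,a)\phi_i(s')$ for $(s,a)\in\mathcal K$, $\bm c=(c(s,a))_{(s,a)\in\mathcal K}$. An optimal basis is a pair $\mathcal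 I^*\subseteq[d_1]$, $\mathcal J^*\subseteq\mathcal K$, $|\mathcal I^*|=|\mathcal J^*|=d_2$, $A_{\mathcal J^*,\mathcal I^*}$ nonsingular, such that $\bm x^*$ with $\bm x^*_{[d_1]\setminus\mathcal I^*}=0$, $A_{\mathcal J^*,\mathcal I^*}\bm x^*_{\mathcal I^*}=\bm c_{\mathcal J^*}$ is optimal. Let $C$ be an upper bound on $2\|\bm x^*\|$. Algorithm 2 (input $N$, $\mathcal I^*,\mathcal J^*$): set $\mathcal H^1=\emptyset$, $\bm c^1=N\bm c$. For $n=1,\dots,N$: form the estimate $\hat A(\mathcal H^n)$ of $A$ from the data in $\mathcal H^n$ (empirical next-state distributions); let $\tilde{\bm x}^n$ have $\tilde{\bm x}^n_{[d_1]\setminus\mathcal I^*}=0$ and $\hat A_{\mathcal J^*,\mathcal I^*}(\mathcal H^n)\tilde{\bm x}^n_{\mathcal I^*}=\bm c^n_{\mathcal J^*}/(N-n+1)$; let $\bm x^n$ be the projection of $\tilde{\bm x}^n$ onto $\{\bm x:\|\bm x\|\le C\}$; for each $(s,a)\in\mathcal J^*$ query the generative model to get $s'(s,a)$ and add it to the data, $\mathcal H^{n+1}=\mathcal H^n\cup\{s'(s,a)\}$; form $A^n\in\mathbb R^{d_2\times d_2}$ with entries $A^n_{(s,a),i}=\phi_i(s)-\gamma\phi_i(s'(s,a))$ for $(s,a)\in\mathcal J^*$, $i\in\mathcal I^*$ (so $\mathbb E[A^n]=A_{\mathcal J^*,\mathcal I^*}$); update $\bm c^{n+1}_{\mathcal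 J^*}=\bm c^n_{\mathcal J^*}-A^n\bm x^n_{\mathcal I^*}$. Output $\bar{\bm x}^N=\frac1N\sum_{n=1}^N\bm x^n$. *)

theory Defs
  imports "HOL-Probability.Probability"
begin

text \<open>Vectors in R^{d1} are functions nat => real (only coordinates below d1 matter);
  vectors indexed by constraints are functions ('s * 'act) => real.\<close>

definition r_vec :: "('s::finite \<Rightarrow> real) \<Rightarrow> (nat \<Rightarrow> 's \<Rightarrow> real) \<Rightarrow> nat \<Rightarrow> real" where
  "r_vec \<mu> \<phi> i = (\<Sum>s\<in>UNIV. \<mu> s * \<phi> i s)"

definition A_mat :: "real \<Rightarrow> ('s::finite \<Rightarrow> 'act \<Rightarrow> 's pmf) \<Rightarrow> (nat \<Rightarrow> 's \<Rightarrow> real)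
    \<Rightarrow> ('s \<times> 'act) \<Rightarrow> nat \<Rightarrow> real" where
  "A_mat \<gamma> P \<phi> sa i =
     \<phi> i (fst sa) - \<gamma> * (\<Sum>s'\<in>UNIV. pmf (P (fst sa) (snd sa)) s' * \<phi> i s')"

definition lp_feasible :: "nat \<Rightarrow> ('s \<times> 'act) set \<Rightarrow> (('s \<times> 'act) \<Rightarrow> nat \<Rightarrow> real)
    \<Rightarrow> ('s \<times> 'act \<Rightarrow> real) \<Rightarrow> (nat \<Rightarrow> real) \<Rightarrow> bool" where
  "lp_feasible d1 K A c x \<longleftrightarrow> (\<forall>j\<in>K. (\<Sum>i<d1. A j i * x i) \<le> c j)"

definition V_LP :: "nat \<Rightarrow> ('s \<times> 'act) set \<Rightarrow> (('s \<times> 'act) \<Rightarrow> nat \<Rightarrow> real)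
    \<Rightarrow> ('s \<times> 'act \<Rightarrow> real) \<Rightarrow> (nat \<Rightarrow> real) \<Rightarrow> real" where
  "V_LP d1 K A c r = Sup {(\<Sum>i<d1. r i * x i) | x. lp_feasible d1 K A c x}"

definition lp_optimal :: "nat \<Rightarrow> ('s \<times> 'act) set \<Rightarrow> (('s \<times> 'act) \<Rightarrow> nat \<Rightarrow> real)
    \<Rightarrow> ('s \<times> 'act \<Rightarrow> real) \<Rightarrow> (nat \<Rightarrow> real) \<Rightarrow> (nat \<Rightarrow> real) \<Rightarrow> bool" where
  "lp_optimal d1 K A c r x \<longleftrightarrow> lp_feasible d1 K A c x \<and>
     (\<forall>z. lp_feasible d1 K A c z \<longrightarrow> (\<Sum>i<d1. r i * z i) \<le> (\<Sum>i<d1. r i * x i))"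

definition dual_feasible :: "nat \<Rightarrow> ('s \<times> 'act) set \<Rightarrow> (('s \<times> 'act) \<Rightarrow> nat \<Rightarrow> real)
    \<Rightarrow> (nat \<Rightarrow> real) \<Rightarrow> ('s \<times> 'act \<Rightarrow> real) \<Rightarrow> bool" where
  "dual_feasible d1 K A r y \<longleftrightarrow> (\<forall>j\<in>K. 0 \<le> y j) \<and> (\<forall>j. j \<notin> K \<longrightarrow> y j = 0) \<and>
     (\<forall>i<d1. (\<Sum>j\<in>K. A j i * y j) = r i)"

definition dual_optimal :: "nat \<Rightarrow> ('s \<times> 'act) set \<Rightarrow> (('s \<times> 'act) \<Rightarrow> nat \<Rightarrow> real)
    \<Rightarrow> ('s \<times> 'act \<Rightarrow> real) \<Rightarrow> (nat \<Rightarrow> real) \<Rightarrow> ('s \<times> 'act \<Rightarrow> real) \<Rightarrow> bool" where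
  "dual_optimal d1 K A c r y \<longleftrightarrow> dual_feasible d1 K A r y \<and>
     (\<forall>z. dual_feasible d1 K A r z \<longrightarrow> (\<Sum>j\<in>K. c j * y j) \<le> (\<Sum>j\<in>K. c j * z j))"

definition nonsingular_sub :: "(('s \<times> 'act) \<Rightarrow> nat \<Rightarrow> real) \<Rightarrow> ('s \<times> 'act) set \<Rightarrow> nat set \<Rightarrow> bool" where
  "nonsingular_sub A J I \<longleftrightarrow>
     (\<forall>v. (\<forall>j\<in>J. (\<Sum>i\<in>I. A j i * v i) = 0) \<longrightarrow> (\<forall>i\<in>I. v i = 0))"

definition optimal_basis :: "nat \<Rightarrow> ('s \<times> 'act) set \<Rightarrow> (('s \<times> 'act) \<Rightarrow> nat \<Rightarrow> real)
    \<Rightarrow> ('s \<times> 'act \<Rightarrow> real) \<Rightarrow> (nat \<Rightarrow> real) \<Rightarrow> nat set \<Rightarrow> ('s \<times> 'act) set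
    \<Rightarrow> (nat \<Rightarrow> real) \<Rightarrow> bool" where
  "optimal_basis d1 K A c r I J x \<longleftrightarrow>
     I \<subseteq> {..<d1} \<and> J \<subseteq> K \<and> card I = card J \<and> nonsingular_sub A J I \<and>
     (\<forall>i. i \<notin> I \<longrightarrow> x i = 0) \<and> (\<forall>j\<in>J. (\<Sum>i\<in>I. A j i * x i) = c j) \<and>
     lp_optimal d1 K A c r x"

definition enorm :: "nat \<Rightarrow> (nat \<Rightarrow> real) \<Rightarrow> real" where
  "enorm d1 x = sqrt (\<Sum>i<d1. (x i)\<^sup>2)"

definition proj_ball :: "nat \<Rightarrow> real \<Rightarrow> (nat \<Rightarrow> real) \<Rightarrow> (nat \<Rightarrow> real)" where
  "proj_ball d1 C x = (if enorm d1 x \<le> C then x else (\<lambda>i. (C / enorm d1 x) * x i))"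

text \<open>Algorithm 2. The random input is  ws :: nat => ('s*'act) => 's,  where  ws m (s,a)
  is the generative-model sample s'(s,a) obtained in round m (1 <= m <= N).
  The data H^n consists of the samples of rounds 1..n-1.\<close>

text \<open>Empirical estimate \<open>\<hat>A(H^n)\<close>: empirical next-state distribution of the samples of rounds
  1..n-1 (with no data the empirical mean is 0, by division by zero).\<close>
definition A_hat :: "real \<Rightarrow> (nat \<Rightarrow> 's \<Rightarrow> real) \<Rightarrow> (nat \<Rightarrow> ('s \<times> 'act) \<Rightarrow> 's) \<Rightarrow> nat
    \<Rightarrow> ('s \<times> 'act) \<Rightarrow> nat \<Rightarrow> real" where
  "A_hat \<gamma> \<phi> ws n sa i =
     \<phi> i (fst sa) - \<gamma> * ((\<Sum>m\<in>{1..<n}. \<phi> i (ws m sa)) / real (n - 1))"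

definition A_samp :: "real \<Rightarrow> (nat \<Rightarrow> 's \<Rightarrow> real) \<Rightarrow> (nat \<Rightarrow> ('s \<times> 'act) \<Rightarrow> 's) \<Rightarrow> nat
    \<Rightarrow> ('s \<times> 'act) \<Rightarrow> nat \<Rightarrow> real" where
  "A_samp \<gamma> \<phi> ws n sa i = \<phi> i (fst sa) - \<gamma> * \<phi> i (ws n sa)"

text \<open>\<open>\<tilde>x\<close>: supported on I and solving \<open>\<hat>A_{J,I} x_I = b_J\<close> (some solution if one exists,
  otherwise 0 -- this case does not occur when \<open>\<hat>A_{J,I}\<close> is nonsingular).\<close>
definition x_tilde :: "(('s \<times> 'act) \<Rightarrow> nat \<Rightarrow> real) \<Rightarrow> nat set \<Rightarrow> ('s \<times> 'act) set
    \<Rightarrow> ('s \<times> 'act \<Rightarrow> real) \<Rightarrow> (nat \<Rightarrow> real)" where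
  "x_tilde Ah I J b =
     (let S = {x. (\<forall>i. i \<notin> I \<longrightarrow> x i = 0) \<and> (\<forall>j\<in>J. (\<Sum>i\<in>I. Ah j i * x i) = b j)}
      in if S \<noteq> {} then (SOME x. x \<in> S) else (\<lambda>_. 0))"

definition alg_x_step :: "real \<Rightarrow> (nat \<Rightarrow> 's \<Rightarrow> real) \<Rightarrow> nat \<Rightarrow> real \<Rightarrow> nat \<Rightarrow> nat set
    \<Rightarrow> ('s \<times> 'act) set \<Rightarrow> (nat \<Rightarrow> ('s \<times> 'act) \<Rightarrow> 's) \<Rightarrow> nat \<Rightarrow> ('s \<times> 'act \<Rightarrow> real)
    \<Rightarrow> (nat \<Rightarrow> real)" where
  "alg_x_step \<gamma> \<phi> d1 C N I J ws n cn =
     proj_ball d1 C (x_tilde (A_hat \<gamma> \<phi> ws n) I J (\<lambda>j. cn j / real (N - n + 1)))"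

text \<open>Budget c^n (n >= 1): c^1 = N c, c^{n+1}_J = c^n_J - A^n x^n_I.
  The value at index 0 is an unused convention.\<close>
fun alg_c :: "real \<Rightarrow> (nat \<Rightarrow> 's \<Rightarrow> real) \<Rightarrow> nat \<Rightarrow> real \<Rightarrow> nat \<Rightarrow> nat set
    \<Rightarrow> ('s \<times> 'act) set \<Rightarrow> ('s \<times> 'act \<Rightarrow> real) \<Rightarrow> (nat \<Rightarrow> ('s \<times> 'act) \<Rightarrow> 's) \<Rightarrow> nat
    \<Rightarrow> ('s \<times> 'act \<Rightarrow> real)" where
  "alg_c \<gamma> \<phi> d1 C N I J c ws 0 = (\<lambda>j. real N * c j)"
| "alg_c \<gamma> \<phi> d1 C N I J c ws (Suc 0) = (\<lambda>j. real N * c j)"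
| "alg_c \<gamma> \<phi> d1 C N I J c ws (Suc (Suc m)) =
     (let cn = alg_c \<gamma> \<phi> d1 C N I J c ws (Suc m);
          xn = alg_x_step \<gamma> \<phi> d1 C N I J ws (Suc m) cn
      in (\<lambda>j. cn j - (\<Sum>i\<in>I. A_samp \<gamma> \<phi> ws (Suc m) j i * xn i)))"

definition alg_x :: "real \<Rightarrow> (nat \<Rightarrow> 's \<Rightarrow> real) \<Rightarrow> nat \<Rightarrow> real \<Rightarrow> nat \<Rightarrow> nat set
    \<Rightarrow> ('s \<times> 'act) set \<Rightarrow> ('s \<times> 'act \<Rightarrow> real) \<Rightarrow> (nat \<Rightarrow> ('s \<times> 'act) \<Rightarrow> 's) \<Rightarrow> nat
    \<Rightarrow> (nat \<Rightarrow> real)" where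
  "alg_x \<gamma> \<phi> d1 C N I J c ws n =
     alg_x_step \<gamma> \<phi> d1 C N I J ws n (alg_c \<gamma> \<phi> d1 C N I J c ws n)"

text \<open>Joint law of all generative-model queries: for each round m in {1..N} and each
  (s,a) in J an independent draw from P(.|s,a).\<close>
definition samples_pmf :: "('s \<Rightarrow> 'act \<Rightarrow> 's pmf) \<Rightarrow> nat \<Rightarrow> ('s \<times> 'act) set
    \<Rightarrow> (nat \<Rightarrow> ('s \<times> 'act) \<Rightarrow> 's) pmf" where
  "samples_pmf P N J =
     Pi_pmf {1..N} undefined (\<lambda>_. Pi_pmf J undefined (\<lambda>sa. P (fst sa) (snd sa)))"

end

theory Submission
  imports Defs
begin

text \<open>The inequality holds with equality.  The iterate x^n is a function of the samples of the
  rounds before n, so it is independent of the round-n samples, whose images under phi_i have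
  exactly the transition term of A as mean; hence E[A^n x^n] = A_{J,I} E[x^n].  Unrolling the
  budget recursion gives E[c^{N+1}] = N c_J - A_{J,I} sum_n E[x^n].  Pairing with y*, the dual
  equations A_{J,I}^T y*_J = r_I turn the second term into sum_n r^T E[x^n], and complementary
  slackness y*^T c_J = r^T x* = V^LP turns the first into N V^LP.\<close>

lemma expectation_pair_pmf_mult:
  fixes f :: "'a \<Rightarrow> real" and g :: "'b \<Rightarrow> real"
  assumes "finite (set_pmf p)" "finite (set_pmf q)"
  shows "measure_pmf.expectation (pair_pmf p q) (\<lambda>z. f (fst z) * g (snd z))
       = measure_pmf.expectation p f * measure_pmf.expectation q g"
proof -
  have "measure_pmf.expectation (pair_pmf p q) (\<lambda>z. f (fst z) * g (snd z))
      = (\<Sum>(x, y)\<in>set_pmf p \<times> set_pmf q. (f x * pmf p x) * (g y * pmf q y))"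
    using assms by (subst integral_measure_pmf_real[where A = "set_pmf p \<times> set_pmf q"])
      (auto intro!: sum.cong simp: pmf_pair)
  also have "\<dots> = (\<Sum>x\<in>set_pmf p. f x * pmf p x) * (\<Sum>y\<in>set_pmf q. g y * pmf q y)"
    by (simp add: sum.cartesian_product[symmetric] sum_product)
  also have "\<dots> = measure_pmf.expectation p f * measure_pmf.expectation q g"
    using assms by (simp add: integral_measure_pmf_real)
  finally show ?thesis .
qed

lemma finite_set_Pi_pmf:
  assumes "finite A" "\<And>x. x \<in> A \<Longrightarrow> finite (set_pmf (p x))"
  shows "finite (set_pmf (Pi_pmf A dflt p))"
  using assms by (auto simp: set_Pi_pmf)

lemma expectation_Pi_pmf_mult_component:
  fixes h :: "'b \<Rightarrow> real" and g :: "('a \<Rightarrow> 'b) \<Rightarrow> real"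
  assumes A: "finite A" "x \<in> A" and fin: "\<And>z. z \<in> A \<Longrightarrow> finite (set_pmf (p z))"
    and g: "\<And>f y. g (f(x := y)) = g f"
  shows "measure_pmf.expectation (Pi_pmf A dflt p) (\<lambda>f. h (f x) * g f)
       = measure_pmf.expectation (p x) h * measure_pmf.expectation (Pi_pmf A dflt p) g"
proof -
  define B where "B = A - {x}"
  have B: "finite B" "x \<notin> B" "A = insert x B"
    using A by (auto simp: B_def)
  have split: "Pi_pmf A dflt p = map_pmf (\<lambda>(y, f). f(x := y)) (pair_pmf (p x) (Pi_pmf B dflt p))"
    unfolding B(3) by (rule Pi_pmf_insert[OF B(1,2)])
  have "measure_pmf.expectation (Pi_pmf A dflt p) (\<lambda>f. h (f x) * g f)
      = measure_pmf.expectation (pair_pmf (p x) (Pi_pmf B dflt p)) (\<lambda>z. h (fst z) * g (snd z))"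
    by (simp add: split case_prod_beta g)
  also have "\<dots> = measure_pmf.expectation (p x) h * measure_pmf.expectation (Pi_pmf B dflt p) g"
    using A fin B by (intro expectation_pair_pmf_mult finite_set_Pi_pmf) auto
  also have "measure_pmf.expectation (Pi_pmf B dflt p) g
      = measure_pmf.expectation (Pi_pmf A dflt p) g"
    by (simp add: split case_prod_beta g)
  finally show ?thesis .
qed

lemma finite_set_samples_pmf:
  fixes P :: "'s::finite \<Rightarrow> 'act::finite \<Rightarrow> 's pmf"
  shows "finite (set_pmf (samples_pmf P N J))"
  unfolding samples_pmf_def by (intro finite_set_Pi_pmf) auto

lemma expectation_samples_pmf_mult:
  fixes P :: "'s::finite \<Rightarrow> 'act::finite \<Rightarrow> 's pmf"
    and h :: "'s \<Rightarrow> real" and g :: "(nat \<Rightarrow> ('s \<times> 'act) \<Rightarrow> 's) \<Rightarrow> real"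
  assumes n: "n \<in> {1..N}" and j: "j \<in> J" and g: "\<And>ws y. g (ws(n := y)) = g ws"
  shows "measure_pmf.expectation (samples_pmf P N J) (\<lambda>ws. h (ws n j) * g ws)
       = measure_pmf.expectation (P (fst j) (snd j)) h
         * measure_pmf.expectation (samples_pmf P N J) g"
proof -
  define Q where "Q = Pi_pmf J undefined (\<lambda>sa. P (fst sa) (snd sa))"
  have "measure_pmf.expectation (samples_pmf P N J) (\<lambda>ws. h (ws n j) * g ws)
      = measure_pmf.expectation Q (\<lambda>w. h (w j)) * measure_pmf.expectation (samples_pmf P N J) g"
    unfolding samples_pmf_def Q_def[symmetric]
    by (rule expectation_Pi_pmf_mult_component[where x = n and h = "\<lambda>w. h (w j)"])
      (use n g in \<open>auto simp: Q_def intro: finite_set_Pi_pmf\<close>)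
  also have "measure_pmf.expectation Q (\<lambda>w. h (w j))
      = measure_pmf.expectation (map_pmf (\<lambda>w. w j) Q) h"
    by simp
  also have "map_pmf (\<lambda>w. w j) Q = P (fst j) (snd j)"
    unfolding Q_def using j by (subst Pi_pmf_component) auto
  finally show ?thesis .
qed

lemma expectation_A_samp_mult:
  fixes P :: "'s::finite \<Rightarrow> 'act::finite \<Rightarrow> 's pmf"
    and g :: "(nat \<Rightarrow> ('s \<times> 'act) \<Rightarrow> 's) \<Rightarrow> real"
  assumes n: "n \<in> {1..N}" and j: "j \<in> J" and g: "\<And>ws y. g (ws(n := y)) = g ws"
  shows "measure_pmf.expectation (samples_pmf P N J) (\<lambda>ws. A_samp \<gamma> \<phi> ws n j i * g ws)
       = A_mat \<gamma> P \<phi> j i * measure_pmf.expectation (samples_pmf P N J) g"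
proof -
  let ?E = "measure_pmf.expectation (samples_pmf P N J)"
  have int: "integrable (measure_pmf (samples_pmf P N J)) f" for f :: "_ \<Rightarrow> real"
    by (rule integrable_measure_pmf_finite[OF finite_set_samples_pmf])
  have mean: "measure_pmf.expectation (P (fst j) (snd j)) (\<phi> i)
      = (\<Sum>s'\<in>UNIV. pmf (P (fst j) (snd j)) s' * \<phi> i s')"
    by (subst integral_measure_pmf_real[where A = UNIV]) (auto simp: mult.commute)
  have "?E (\<lambda>ws. A_samp \<gamma> \<phi> ws n j i * g ws)
      = ?E (\<lambda>ws. \<phi> i (fst j) * g ws - \<gamma> * (\<phi> i (ws n j) * g ws))"
    by (simp add: A_samp_def algebra_simps)
  also have "\<dots> = \<phi> i (fst j) * ?E g - \<gamma> * ?E (\<lambda>ws. \<phi> i (ws n j) * g ws)"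
    by (simp add: int)
  also have "?E (\<lambda>ws. \<phi> i (ws n j) * g ws)
      = measure_pmf.expectation (P (fst j) (snd j)) (\<phi> i) * ?E g"
    by (rule expectation_samples_pmf_mult[where h = "\<phi> i" and g = g, OF n j g])
  finally show ?thesis
    by (simp add: A_mat_def mean algebra_simps)
qed

lemma A_hat_cong:
  "(\<And>m. m < n \<Longrightarrow> ws m = ws' m) \<Longrightarrow> A_hat \<gamma> \<phi> ws n = A_hat \<gamma> \<phi> ws' n"
  unfolding A_hat_def by (intro ext) (auto intro!: sum.cong)

lemma alg_x_step_cong:
  "(\<And>m. m < n \<Longrightarrow> ws m = ws' m) \<Longrightarrow>
     alg_x_step \<gamma> \<phi> d1 C N I J ws n cn = alg_x_step \<gamma> \<phi> d1 C N I J ws' n cn"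
  unfolding alg_x_step_def by (metis A_hat_cong)

lemma alg_c_cong:
  "(\<And>m. m < k \<Longrightarrow> ws m = ws' m) \<Longrightarrow>
     alg_c \<gamma> \<phi> d1 C N I J c ws k = alg_c \<gamma> \<phi> d1 C N I J c ws' k"
proof (induction \<gamma> \<phi> d1 C N I J c ws k rule: alg_c.induct)
  case (3 \<gamma> \<phi> d1 C N I J c ws m)
  have "alg_c \<gamma> \<phi> d1 C N I J c ws (Suc m) = alg_c \<gamma> \<phi> d1 C N I J c ws' (Suc m)"
    using 3 by simp
  moreover have "alg_x_step \<gamma> \<phi> d1 C N I J ws (Suc m) = alg_x_step \<gamma> \<phi> d1 C N I J ws' (Suc m)"
    using 3(2) by (intro ext alg_x_step_cong) simp
  moreover have "ws (Suc m) = ws' (Suc m)"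
    using 3(2) by simp
  ultimately show ?case
    by (simp add: Let_def A_samp_def)
qed auto

lemma alg_x_cong:
  "(\<And>m. m < n \<Longrightarrow> ws m = ws' m) \<Longrightarrow>
     alg_x \<gamma> \<phi> d1 C N I J c ws n = alg_x \<gamma> \<phi> d1 C N I J c ws' n"
  unfolding alg_x_def by (metis alg_c_cong alg_x_step_cong)

lemma x_tilde_eq_0:
  assumes "i \<notin> I"
  shows "x_tilde Ah I J b i = 0"
  using assms someI_ex[of "\<lambda>x. (\<forall>i. i \<notin> I \<longrightarrow> x i = 0) \<and> (\<forall>j\<in>J. (\<Sum>i\<in>I. Ah j i * x i) = b j)"]
  by (auto simp: x_tilde_def Let_def)

lemma alg_x_eq_0:
  "i \<notin> I \<Longrightarrow> alg_x \<gamma> \<phi> d1 C N I J c ws n i = 0"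
  unfolding alg_x_def alg_x_step_def proj_ball_def by (simp add: x_tilde_eq_0)

lemma alg_c_eq_sum:
  "1 \<le> k \<Longrightarrow> alg_c \<gamma> \<phi> d1 C N I J c ws k j = real N * c j -
     (\<Sum>n\<in>{1..<k}. \<Sum>i\<in>I. A_samp \<gamma> \<phi> ws n j i * alg_x \<gamma> \<phi> d1 C N I J c ws n i)"
proof (induction k)
  case (Suc k)
  show ?case
  proof (cases k)
    case (Suc m)
    have "{1..<Suc (Suc m)} = insert (Suc m) {1..<Suc m}" by auto
    with Suc.IH show ?thesis
      unfolding Suc by (simp add: Let_def alg_x_def)
  qed simp
qed simp

lemma expectation_alg_c:
  fixes P :: "'s::finite \<Rightarrow> 'act::finite \<Rightarrow> 's pmf"
  assumes "j \<in> J"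
  shows "measure_pmf.expectation (samples_pmf P N J) (\<lambda>ws. alg_c \<gamma> \<phi> d1 C N I J c ws (N + 1) j)
       = real N * c j - (\<Sum>n\<in>{1..N}. \<Sum>i\<in>I. A_mat \<gamma> P \<phi> j i *
           measure_pmf.expectation (samples_pmf P N J) (\<lambda>ws. alg_x \<gamma> \<phi> d1 C N I J c ws n i))"
proof -
  let ?E = "measure_pmf.expectation (samples_pmf P N J)"
  let ?x = "\<lambda>ws n. alg_x \<gamma> \<phi> d1 C N I J c ws n"
  have int: "integrable (measure_pmf (samples_pmf P N J)) f" for f :: "_ \<Rightarrow> real"
    by (rule integrable_measure_pmf_finite[OF finite_set_samples_pmf])
  have x_past: "?x (ws(n := y)) n i = ?x ws n i" for ws n y i
    by (simp add: alg_x_cong[of n "ws(n := y)" ws])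
  have "?E (\<lambda>ws. alg_c \<gamma> \<phi> d1 C N I J c ws (N + 1) j)
      = ?E (\<lambda>ws. real N * c j - (\<Sum>n\<in>{1..N}. \<Sum>i\<in>I. A_samp \<gamma> \<phi> ws n j i * ?x ws n i))"
    by (simp add: alg_c_eq_sum atLeastLessThanSuc_atLeastAtMost)
  also have "\<dots> = real N * c j - (\<Sum>n\<in>{1..N}. \<Sum>i\<in>I. ?E (\<lambda>ws. A_samp \<gamma> \<phi> ws n j i * ?x ws n i))"
    by (simp add: int integral_sum)
  also have "\<dots> = real N * c j - (\<Sum>n\<in>{1..N}. \<Sum>i\<in>I. A_mat \<gamma> P \<phi> j i * ?E (\<lambda>ws. ?x ws n i))"
    using assms x_past by (simp add: expectation_A_samp_mult)
  finally show ?thesis .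
qed

lemma V_LP_eq_objective:
  "lp_optimal d1 K A c r x \<Longrightarrow> V_LP d1 K A c r = (\<Sum>i<d1. r i * x i)"
  unfolding V_LP_def lp_optimal_def by (rule cSup_eq_maximum) auto

lemma objective_eq_dual_objective:
  fixes d1 :: nat and A :: "'j \<Rightarrow> nat \<Rightarrow> real" and r x :: "nat \<Rightarrow> real"
  assumes I: "I \<subseteq> {..<d1}" and x_supp: "\<And>i. i \<notin> I \<Longrightarrow> x i = 0"
    and primal: "\<And>j. j \<in> J \<Longrightarrow> (\<Sum>i\<in>I. A j i * x i) = c j"
    and dual: "\<And>i. i \<in> I \<Longrightarrow> (\<Sum>j\<in>J. A j i * y j) = r i"
  shows "(\<Sum>i<d1. r i * x i) = (\<Sum>j\<in>J. y j * c j)"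
proof -
  have "(\<Sum>i<d1. r i * x i) = (\<Sum>i\<in>I. r i * x i)"
    using I x_supp by (intro sum.mono_neutral_right) auto
  also have "\<dots> = (\<Sum>i\<in>I. \<Sum>j\<in>J. A j i * y j * x i)"
    by (rule sum.cong) (simp_all add: dual[symmetric] sum_distrib_right)
  also have "\<dots> = (\<Sum>j\<in>J. y j * (\<Sum>i\<in>I. A j i * x i))"
    by (subst sum.swap) (simp add: sum_distrib_left algebra_simps)
  also have "\<dots> = (\<Sum>j\<in>J. y j * c j)"
    by (simp add: primal)
  finally show ?thesis .
qed

lemma expectation_objective_alg_x:
  fixes P :: "'s::finite \<Rightarrow> 'act::finite \<Rightarrow> 's pmf" and d1 :: nat
  assumes "I \<subseteq> {..<d1}"
  shows "measure_pmf.expectation (samples_pmf P N J)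
           (\<lambda>ws. \<Sum>i<d1. r i * alg_x \<gamma> \<phi> d1 C N I J c ws n i)
       = (\<Sum>i\<in>I. r i * measure_pmf.expectation (samples_pmf P N J)
           (\<lambda>ws. alg_x \<gamma> \<phi> d1 C N I J c ws n i))"
proof -
  let ?E = "measure_pmf.expectation (samples_pmf P N J)"
  have "?E (\<lambda>ws. \<Sum>i<d1. r i * alg_x \<gamma> \<phi> d1 C N I J c ws n i)
      = (\<Sum>i<d1. r i * ?E (\<lambda>ws. alg_x \<gamma> \<phi> d1 C N I J c ws n i))"
    by (simp add: integrable_measure_pmf_finite[OF finite_set_samples_pmf] integral_sum)
  also have "\<dots> = (\<Sum>i\<in>I. r i * ?E (\<lambda>ws. alg_x \<gamma> \<phi> d1 C N I J c ws n i))"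
    using assms by (intro sum.mono_neutral_right) (auto simp: alg_x_eq_0)
  finally show ?thesis .
qed

theorem lemma2:
  fixes P :: "'s::finite \<Rightarrow> 'act::finite \<Rightarrow> 's pmf"
    and cost :: "'s \<Rightarrow> 'act \<Rightarrow> real" and \<gamma> :: real and \<mu> :: "'s \<Rightarrow> real"
    and \<phi> :: "nat \<Rightarrow> 's \<Rightarrow> real" and d1 :: nat and K :: "('s \<times> 'act) set"
    and I :: "nat set" and J :: "('s \<times> 'act) set"
    and xstar :: "nat \<Rightarrow> real" and ystar :: "'s \<times> 'act \<Rightarrow> real"
    and C :: real and N :: nat
  defines "A \<equiv> A_mat \<gamma> P \<phi>"
      and "r \<equiv> r_vec \<mu> \<phi>"
      and "c \<equiv> (\<lambda>sa. cost (fst sa) (snd sa))"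
  assumes "0 < \<gamma>" and "\<gamma> < 1"
      and "\<And>s a. 0 \<le> cost s a \<and> cost s a \<le> 1"
      and "\<And>s. 0 < \<mu> s"
      and basis: "optimal_basis d1 K A c r I J xstar"
      and dual_supp: "\<And>j. j \<notin> J \<Longrightarrow> ystar j = 0"
      and dual_basis: "\<And>i. i \<in> I \<Longrightarrow> (\<Sum>j\<in>J. A j i * ystar j) = r i"
      and dual_opt: "dual_optimal d1 K A c r ystar"
      and C_bound: "2 * enorm d1 xstar \<le> C"
  shows "real N * V_LP d1 K A c r
           - (\<Sum>n\<in>{1..N}. measure_pmf.expectation (samples_pmf P N J)
                (\<lambda>ws. \<Sum>i<d1. r i * alg_x \<gamma> \<phi> d1 C N I J c ws n i))
         \<le> (\<Sum>j\<in>J. ystar j * measure_pmf.expectation (samples_pmf P N J)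
                (\<lambda>ws. alg_c \<gamma> \<phi> d1 C N I J c ws (N + 1) j))"
proof -
  let ?E = "measure_pmf.expectation (samples_pmf P N J)"
  let ?Ex = "\<lambda>n i. ?E (\<lambda>ws. alg_x \<gamma> \<phi> d1 C N I J c ws n i)"
  from basis have I: "I \<subseteq> {..<d1}" and x_supp: "\<And>i. i \<notin> I \<Longrightarrow> xstar i = 0"
    and primal: "\<And>j. j \<in> J \<Longrightarrow> (\<Sum>i\<in>I. A j i * xstar i) = c j"
    and opt: "lp_optimal d1 K A c r xstar"
    unfolding optimal_basis_def by auto
  have V: "V_LP d1 K A c r = (\<Sum>j\<in>J. ystar j * c j)"
    using V_LP_eq_objective[OF opt] objective_eq_dual_objective[OF I x_supp primal dual_basis]
    by simp
  have "(\<Sum>j\<in>J. ystar j * ?E (\<lambda>ws. alg_c \<gamma> \<phi> d1 C N I J c ws (N + 1) j))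
      = (\<Sum>j\<in>J. ystar j * (real N * c j - (\<Sum>n\<in>{1..N}. \<Sum>i\<in>I. A j i * ?Ex n i)))"
    unfolding A_def by (intro sum.cong refl) (simp only: expectation_alg_c)
  also have "\<dots> = real N * (\<Sum>j\<in>J. ystar j * c j)
      - (\<Sum>n\<in>{1..N}. \<Sum>i\<in>I. (\<Sum>j\<in>J. A j i * ystar j) * ?Ex n i)"
    by (simp add: sum_subtractf sum_distrib_left sum_distrib_right
        algebra_simps sum.swap[of _ J])
  also have "\<dots> = real N * V_LP d1 K A c r
      - (\<Sum>n\<in>{1..N}. ?E (\<lambda>ws. \<Sum>i<d1. r i * alg_x \<gamma> \<phi> d1 C N I J c ws n i))"
    by (simp add: V expectation_objective_alg_x[OF I] dual_basis)
  finally show ?thesis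
    by simp
qed

end
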